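(* Let $m\ge 1$, and let $(\Gamma,\tau)$ be a translation quiver such that for any arrow $x\to y$ in $\Gamma$, $x$ is projective whenever $y$ is projective. Then the translation quiver $(\Gamma^m,\tau^m)$ has the same property: for any arrow $x\to y$ in $\Gamma^m$, $x$ is projective in $(\Gamma^m,\tau^m)$ whenever $y$ is projective in $(\Gamma^m,\tau^m)$.
   Context: A translation quiver is a pair $(\Gamma,\tau)$ with the following properties: $\Gamma$ is a locally finite quiver (multiple arrows allowed) with vertex set $\Gamma_0$; $\tau:\Gamma_0'\to\Gamma_0$ is an injective map defined on a subset $\Gamma_0'\subseteq\Gamma_0$; and for all $X\in\Gamma_0$ and $Y\in\Gamma_0'$ the number of arrows $X\to Y$ equals the number of arrows $\tau(Y)\to X$. Vertices where the translation is not defined are called projective; in $(\Gamma^m,\tau^m)$, a vertex is projective if $\tau^m$ is not defined on it. A path $x_0\to x_1\to\cdots\to x_m$ in $\Gamma$ is sectional if $\tau x_{i+1}\ne x_{i-1}$ for every $i=1,\dots,m-1$ for which $\tau x_{i+1}$ is defined. The quiver $\Gamma^m$ has the same vertices as $\Gamma$ and one arrow $x\to y$ for each sectional path of length $m$ from $x$ to $y$ in $\Gamma$. The map $\tau^m$ is the $m$-fold composite of $\tau$, defined where this composite is defined. Under the hypothesis, $(\Gamma^m,\tau^m)$ is a translation quiver. *)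

theory Defs
  imports Main
begin

text \<open>A quiver with vertex set V, arrow set E, source map s and target map t
  (multiple arrows allowed). A translation is a partial map tau on vertices;
  tau y = None means y is projective.\<close>

definition locally_finite_quiver ::
  "'v set \<Rightarrow> 'e set \<Rightarrow> ('e \<Rightarrow> 'v) \<Rightarrow> ('e \<Rightarrow> 'v) \<Rightarrow> bool" where
  "locally_finite_quiver V E s t \<longleftrightarrow>
     (\<forall>e\<in>E. s e \<in> V \<and> t e \<in> V) \<and>
     (\<forall>x\<in>V. finite {e\<in>E. s e = x} \<and> finite {e\<in>E. t e = x})"

definition translation_quiver ::
  "'v set \<Rightarrow> 'e set \<Rightarrow> ('e \<Rightarrow> 'v) \<Rightarrow> ('e \<Rightarrow> 'v) \<Rightarrow> ('v \<Rightarrow> 'v option) \<Rightarrow> bool" where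
  "translation_quiver V E s t tau \<longleftrightarrow>
     locally_finite_quiver V E s t \<and>
     dom tau \<subseteq> V \<and> ran tau \<subseteq> V \<and> inj_on tau (dom tau) \<and>
     (\<forall>X\<in>V. \<forall>Y\<in>dom tau.
        card {e\<in>E. s e = X \<and> t e = Y} = card {e\<in>E. s e = the (tau Y) \<and> t e = X})"

fun tau_pow :: "('v \<Rightarrow> 'v option) \<Rightarrow> nat \<Rightarrow> 'v \<Rightarrow> 'v option" where
  "tau_pow tau 0 y = Some y"
| "tau_pow tau (Suc n) y = (case tau_pow tau n y of None \<Rightarrow> None | Some z \<Rightarrow> tau z)"

text \<open>A path is a list of arrows es = [a_1,...,a_m] with t a_i = s a_(i+1);
  its vertices are x_0 = s a_1 and x_i = t a_i. Sectional: tau x_(i+1) \<noteq> x_(i-1)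
  for 1 \<le> i \<le> m-1 whenever tau x_(i+1) is defined, i.e. t (es!i) and s (es!(i-1)).\<close>
definition sectional_path ::
  "'e set \<Rightarrow> ('e \<Rightarrow> 'v) \<Rightarrow> ('e \<Rightarrow> 'v) \<Rightarrow> ('v \<Rightarrow> 'v option) \<Rightarrow> nat \<Rightarrow> 'v \<Rightarrow> 'v \<Rightarrow> 'e list \<Rightarrow> bool" where
  "sectional_path E s t tau m x y es \<longleftrightarrow>
     length es = m \<and> set es \<subseteq> E \<and>
     (\<forall>i. Suc i < m \<longrightarrow> t (es ! i) = s (es ! Suc i)) \<and>
     (m = 0 \<longrightarrow> x = y) \<and>
     (0 < m \<longrightarrow> s (es ! 0) = x \<and> t (es ! (m - 1)) = y) \<and>
     (\<forall>i. 1 \<le> i \<and> i < m \<longrightarrow> tau (t (es ! i)) \<noteq> Some (s (es ! (i - 1))))"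

text \<open>Arrows of Gamma^m: sectional paths of length m in Gamma (with their endpoints).\<close>
definition power_arrows ::
  "'e set \<Rightarrow> ('e \<Rightarrow> 'v) \<Rightarrow> ('e \<Rightarrow> 'v) \<Rightarrow> ('v \<Rightarrow> 'v option) \<Rightarrow> nat \<Rightarrow> ('v \<times> 'v \<times> 'e list) set" where
  "power_arrows E s t tau m = {(x, y, es). sectional_path E s t tau m x y es}"

end

theory Submission
  imports Defs
begin

text \<open>If \<open>x \<rightarrow> y\<close> is an arrow and \<open>\<tau> x\<close> is defined, then so is \<open>\<tau> y\<close> by hypothesis,
  and the translation-quiver axiom, applied twice, yields arrows \<open>\<tau> y \<rightarrow> x\<close> and then
  \<open>\<tau> x \<rightarrow> \<tau> y\<close>. By induction on \<open>k\<close>, definedness of \<open>\<tau>\<^sup>k\<close> therefore propagates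
  forward along every arrow of \<open>\<Gamma>\<close>, hence along every path, and in particular
  along the sectional paths that form the arrows of \<open>\<Gamma>\<^sup>m\<close>.\<close>

lemma tau_pow_Suc_right:
  "tau_pow tau (Suc n) y = (case tau y of None \<Rightarrow> None | Some z \<Rightarrow> tau_pow tau n z)"
  by (induction n arbitrary: y) (auto split: option.splits)

lemma translation_quiver_arrow_from_tau:
  assumes tq: "translation_quiver V E s t tau"
    and e: "e \<in> E" and tau_te: "tau (t e) = Some y'"
  shows "\<exists>e'\<in>E. s e' = y' \<and> t e' = s e"
proof -
  let ?A = "{a\<in>E. s a = s e \<and> t a = t e}"
  have se: "s e \<in> V"
    using tq e unfolding translation_quiver_def locally_finite_quiver_def by auto
  have "finite ?A"
    using tq se unfolding translation_quiver_def locally_finite_quiver_def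
    by (auto intro: finite_subset[of _ "{a\<in>E. s a = s e}"])
  moreover have "e \<in> ?A" using e by simp
  ultimately have "card ?A > 0" by (auto simp: card_gt_0_iff)
  moreover have "card ?A = card {a\<in>E. s a = y' \<and> t a = s e}"
    using tq se tau_te unfolding translation_quiver_def by (auto simp: domI)
  ultimately have "{a\<in>E. s a = y' \<and> t a = s e} \<noteq> {}" by force
  then show ?thesis by auto
qed

lemma arrow_preserves_tau_pow_defined:
  assumes tq: "translation_quiver V E s t tau"
    and proj: "\<forall>e\<in>E. tau (t e) = None \<longrightarrow> tau (s e) = None"
    and "e \<in> E" and "tau_pow tau k (s e) \<noteq> None"
  shows "tau_pow tau k (t e) \<noteq> None"
  using assms(3,4)
proof (induction k arbitrary: e)
  case 0
  then show ?case by simp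
next
  case (Suc k)
  obtain x' where x': "tau (s e) = Some x'" and k_x': "tau_pow tau k x' \<noteq> None"
    using Suc.prems(2) unfolding tau_pow_Suc_right by (auto split: option.splits)
  obtain y' where y': "tau (t e) = Some y'"
    using proj Suc.prems(1) x' by fastforce
  obtain e1 where e1: "e1 \<in> E" "s e1 = y'" "t e1 = s e"
    using translation_quiver_arrow_from_tau[OF tq Suc.prems(1) y'] by blast
  obtain e2 where e2: "e2 \<in> E" "s e2 = x'" "t e2 = y'"
    using translation_quiver_arrow_from_tau[OF tq e1(1)] e1 x' by auto
  have "tau_pow tau k y' \<noteq> None"
    using Suc.IH[OF e2(1)] e2 k_x' by simp
  then show ?case
    using y' unfolding tau_pow_Suc_right by simp
qed

lemma path_preserves_tau_pow_defined:
  assumes tq: "translation_quiver V E s t tau"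
    and proj: "\<forall>e\<in>E. tau (t e) = None \<longrightarrow> tau (s e) = None"
    and path: "sectional_path E s t tau m x y es"
    and x: "tau_pow tau k x \<noteq> None"
  shows "tau_pow tau k y \<noteq> None"
proof (cases "m = 0")
  case True
  then show ?thesis using path x by (simp add: sectional_path_def)
next
  case False
  have edges: "\<And>i. i < m \<Longrightarrow> es ! i \<in> E"
    and chain: "\<And>i. Suc i < m \<Longrightarrow> t (es ! i) = s (es ! Suc i)"
    and first: "s (es ! 0) = x" and last: "t (es ! (m - 1)) = y"
    using path False unfolding sectional_path_def by (auto dest: nth_mem)
  have arrow: "i < m \<Longrightarrow> tau_pow tau k (t (es ! i)) \<noteq> None" for i
  proof (induction i)
    case 0
    then show ?case
      using arrow_preserves_tau_pow_defined[OF tq proj edges] False first x by auto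
  next
    case (Suc i)
    then have "tau_pow tau k (s (es ! Suc i)) \<noteq> None" using chain by simp
    then show ?case
      using arrow_preserves_tau_pow_defined[OF tq proj edges] Suc.prems by auto
  qed
  show ?thesis using arrow[of "m - 1"] False last by simp
qed

theorem proposition6p3:
  fixes V :: "'v set" and E :: "'e set" and s t :: "'e \<Rightarrow> 'v"
    and tau :: "'v \<Rightarrow> 'v option" and m :: nat
  assumes "m \<ge> 1"
    and "translation_quiver V E s t tau"
    and "\<forall>e\<in>E. tau (t e) = None \<longrightarrow> tau (s e) = None"
  shows "\<forall>(x, y, es)\<in>power_arrows E s t tau m.
           tau_pow tau m y = None \<longrightarrow> tau_pow tau m x = None"
  using path_preserves_tau_pow_defined[OF assms(2,3), where k = m]
  unfolding power_arrows_def by blast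

end
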